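(* Assume the standing setting below and fix $\rho>0$. For any $\zeta=(\zeta_1,\dots,\zeta_L)\in\mathsf Z$, writing $\bar\zeta_\ell=\frac1{|A_\ell|}\sum_{v\in A_\ell}\zeta_\ell(v)$: (i) there exists a unique pair $(\lambda,z)\in\mathsf Z\times\mathsf Z$ with $z\in\partial g^*(\lambda)$ and $\lambda+\rho z=\zeta$; (ii) $J_{\rho U}(\zeta)=\lambda$; (iii) for each $\ell$, $\lambda_\ell=\zeta_\ell-\bar\zeta_\ell 1_{A_\ell}$ and $z_\ell=\frac{\bar\zeta_\ell}{\rho}1_{A_\ell}$; write $\bar z_\ell=\bar\zeta_\ell/\rho$ for the constant value of $z_\ell$; (iv) for each $\ell$ and each $v\in A_\ell$, the $\ell$-th block of $S=J_R$ is $S_\ell(\zeta)(v)=\lambda_\ell(v)+\rho\,x(v)$, where for every $v\in V$ $$x(v)=\mathrm{prox}_{f_v,\rho|\sigma(v)|}\Big(\frac1{|\sigma(v)|}\sum_{m\in\sigma(v)}\Big(\bar z_m-\frac{\lambda_m(v)}{\rho}\Big)\Big).$$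
   Context: $V$ finite set, $\mathsf X$ Euclidean space, $f_v:\mathsf X\to(-\infty,+\infty]$ proper closed convex for each $v\in V$, and $\inf_{y\in\mathsf X}\sum_v f_v(y)$ is finite and attained. $A_1,\dots,A_L\subset V$ with $\bigcup_\ell A_\ell=V$ and $\bigcup_\ell G(A_\ell)$ connected (for a graph $G=(V,E)$; $G(A)$ = induced subgraph). $\mathsf X^A$: functions $A\to\mathsf X$ with inner product $\sum_{v\in A}\langle x(v),y(v)\rangle$; $1_A$ constant one; $\mathrm{sp}(1_A)$ constants on $A$. $\mathsf Z=\mathsf X^{A_1}\times\cdots\times\mathsf X^{A_L}$ with the sum inner product. $f(x)=\sum_v f_v(x(v))$ on $\mathsf X^V$; $g(z)=\sum_\ell\iota_{\mathrm{sp}(1_{A_\ell})}(z_\ell)$ ($\iota_H$ = $0$ on $H$, $+\infty$ elsewhere); $M:\mathsf X^V\to\mathsf Z$, $Mx=(x|_{A_1},\dots,x|_{A_L})$, with adjoint $M^*$; $f^*,g^*$ Fenchel conjugates. $\sigma(v)=\{\ell:v\in A_\ell\}$. $\mathrm{prox}_{h,\rho}(x)=\arg\min_y h(y)+\frac\rho2\|y-x\|^2$. Operators on $\mathsf Z$ (set-valued, identified with graphs): $T(\nu)=\{-Mx: x\in\partial f^*(-M^*\nu)\}$ (the subdifferential of $\nu\mapsto f^*(-M^*\nu)$), $U=\partial g^*$. Resolvent $J_{\rho U}=(I+\rho U)^{-1}$. Douglas–Rachford operator $R=\{(\nu+\rho b,\ \mu-\nu): (\mu,b)\in U,\ (\nu,a)\in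 T,\ \nu+\rho a=\mu-\rho b\}$, and $S=J_R=(I+R)^{-1}$, which is single valued with domain $\mathsf Z$ and blocks $S(\zeta)=(S_1(\zeta),\dots,S_L(\zeta))$, $S_\ell(\zeta)\in\mathsf X^{A_\ell}$. *)

theory Defs
  imports "HOL-Analysis.Analysis" "HOL-Library.Function_Algebras"
begin

text \<open>An inner product space is given by a carrier set C (a linear subspace of a
function type) and an inner product ip on it.\<close>

definition proper_fun :: "('a \<Rightarrow> ereal) \<Rightarrow> bool" where
  "proper_fun h \<longleftrightarrow> (\<forall>x. h x \<noteq> -\<infinity>) \<and> (\<exists>x. h x \<noteq> \<infinity>)"

definition closed_fun :: "('a::topological_space \<Rightarrow> ereal) \<Rightarrow> bool" where
  "closed_fun h \<longleftrightarrow> closed {(x, r::real). h x \<le> ereal r}"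

definition convex_fun :: "('a::real_vector \<Rightarrow> ereal) \<Rightarrow> bool" where
  "convex_fun h \<longleftrightarrow> (\<forall>x y t. 0 \<le> t \<and> t \<le> 1 \<longrightarrow>
      h ((1 - t) *\<^sub>R x + t *\<^sub>R y) \<le> ereal (1 - t) * h x + ereal t * h y)"

definition fconj :: "'a set \<Rightarrow> ('a \<Rightarrow> 'a \<Rightarrow> real) \<Rightarrow> ('a \<Rightarrow> ereal) \<Rightarrow> 'a \<Rightarrow> ereal" where
  "fconj C ip h y = (SUP x\<in>C. ereal (ip y x) - h x)"

definition subdiff :: "'a set \<Rightarrow> ('a \<Rightarrow> 'a \<Rightarrow> real) \<Rightarrow> ('a::ab_group_add \<Rightarrow> ereal) \<Rightarrow> 'a \<Rightarrow> 'a set" where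
  "subdiff C ip h x = {y \<in> C. x \<in> C \<and> \<bar>h x\<bar> \<noteq> \<infinity> \<and>
      (\<forall>w\<in>C. h x + ereal (ip y (w - x)) \<le> h w)}"

definition prox :: "('x::euclidean_space \<Rightarrow> ereal) \<Rightarrow> real \<Rightarrow> 'x \<Rightarrow> 'x" where
  "prox h c x = arg_min (\<lambda>y. h y + ereal (c / 2 * (norm (y - x))\<^sup>2)) (\<lambda>_. True)"

text \<open>Elements of X^V are functions V -> X, extended by 0 outside V.\<close>
definition XV :: "'v set \<Rightarrow> ('v \<Rightarrow> 'x::euclidean_space) set" where
  "XV V = {x. \<forall>v. v \<notin> V \<longrightarrow> x v = 0}"

definition ipV :: "'v set \<Rightarrow> ('v \<Rightarrow> 'x::euclidean_space) \<Rightarrow> ('v \<Rightarrow> 'x) \<Rightarrow> real" where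
  "ipV V x y = (\<Sum>v\<in>V. x v \<bullet> y v)"

text \<open>Blocks are indexed by l < L; block l lives on A l; extended by 0 elsewhere.\<close>
definition ZS :: "nat \<Rightarrow> (nat \<Rightarrow> 'v set) \<Rightarrow> (nat \<Rightarrow> 'v \<Rightarrow> 'x::euclidean_space) set" where
  "ZS L A = {z. \<forall>l v. (L \<le> l \<or> v \<notin> A l) \<longrightarrow> z l v = 0}"

definition ipZ :: "nat \<Rightarrow> (nat \<Rightarrow> 'v set) \<Rightarrow> (nat \<Rightarrow> 'v \<Rightarrow> 'x::euclidean_space)
    \<Rightarrow> (nat \<Rightarrow> 'v \<Rightarrow> 'x) \<Rightarrow> real" where
  "ipZ L A z w = (\<Sum>l<L. \<Sum>v\<in>A l. z l v \<bullet> w l v)"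

definition sigma_idx :: "nat \<Rightarrow> (nat \<Rightarrow> 'v set) \<Rightarrow> 'v \<Rightarrow> nat set" where
  "sigma_idx L A v = {l. l < L \<and> v \<in> A l}"

definition Mop :: "nat \<Rightarrow> (nat \<Rightarrow> 'v set) \<Rightarrow> ('v \<Rightarrow> 'x::euclidean_space) \<Rightarrow> (nat \<Rightarrow> 'v \<Rightarrow> 'x)" where
  "Mop L A x = (\<lambda>l v. if l < L \<and> v \<in> A l then x v else 0)"

definition Madj :: "'v set \<Rightarrow> nat \<Rightarrow> (nat \<Rightarrow> 'v set) \<Rightarrow> (nat \<Rightarrow> 'v \<Rightarrow> 'x::euclidean_space) \<Rightarrow> ('v \<Rightarrow> 'x)" where
  "Madj V L A w = (\<lambda>v. if v \<in> V then (\<Sum>l\<in>sigma_idx L A v. w l v) else 0)"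

definition fsum :: "'v set \<Rightarrow> ('v \<Rightarrow> 'x::euclidean_space \<Rightarrow> ereal) \<Rightarrow> ('v \<Rightarrow> 'x) \<Rightarrow> ereal" where
  "fsum V fv x = (\<Sum>v\<in>V. fv v (x v))"

text \<open>g(z) = sum of indicators of sp(1_{A_l}).\<close>
definition gfun :: "nat \<Rightarrow> (nat \<Rightarrow> 'v set) \<Rightarrow> (nat \<Rightarrow> 'v \<Rightarrow> 'x::euclidean_space) \<Rightarrow> ereal" where
  "gfun L A z = (\<Sum>l<L. if (\<exists>c. \<forall>v\<in>A l. z l v = c) then 0 else \<infinity>)"

definition Top :: "'v set \<Rightarrow> nat \<Rightarrow> (nat \<Rightarrow> 'v set) \<Rightarrow> ('v \<Rightarrow> 'x::euclidean_space \<Rightarrow> ereal)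
    \<Rightarrow> ((nat \<Rightarrow> 'v \<Rightarrow> 'x) \<times> (nat \<Rightarrow> 'v \<Rightarrow> 'x)) set" where
  "Top V L A fv = {(\<nu>, - Mop L A x) | \<nu> x. \<nu> \<in> ZS L A \<and>
      x \<in> subdiff (XV V) (ipV V) (fconj (XV V) (ipV V) (fsum V fv)) (- Madj V L A \<nu>)}"

definition Uop :: "nat \<Rightarrow> (nat \<Rightarrow> 'v set) \<Rightarrow> ((nat \<Rightarrow> 'v \<Rightarrow> 'x::euclidean_space) \<times> (nat \<Rightarrow> 'v \<Rightarrow> 'x)) set" where
  "Uop L A = {(lam, z). lam \<in> ZS L A \<and>
      z \<in> subdiff (ZS L A) (ipZ L A) (fconj (ZS L A) (ipZ L A) (gfun L A)) lam}"

text \<open>Resolvent (I + c Op)^{-1} as a graph.\<close>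
definition resolventZ :: "real \<Rightarrow> ((nat \<Rightarrow> 'v \<Rightarrow> 'x::euclidean_space) \<times> (nat \<Rightarrow> 'v \<Rightarrow> 'x)) set
    \<Rightarrow> ((nat \<Rightarrow> 'v \<Rightarrow> 'x) \<times> (nat \<Rightarrow> 'v \<Rightarrow> 'x)) set" where
  "resolventZ c Op = {((\<lambda>l v. x l v + c *\<^sub>R y l v), x) | x y. (x, y) \<in> Op}"

definition DRop :: "real \<Rightarrow> ((nat \<Rightarrow> 'v \<Rightarrow> 'x::euclidean_space) \<times> (nat \<Rightarrow> 'v \<Rightarrow> 'x)) set
    \<Rightarrow> ((nat \<Rightarrow> 'v \<Rightarrow> 'x) \<times> (nat \<Rightarrow> 'v \<Rightarrow> 'x)) set
    \<Rightarrow> ((nat \<Rightarrow> 'v \<Rightarrow> 'x) \<times> (nat \<Rightarrow> 'v \<Rightarrow> 'x)) set" where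
  "DRop \<rho> T U = {((\<lambda>l v. \<nu> l v + \<rho> *\<^sub>R b l v), (\<lambda>l v. \<mu> l v - \<nu> l v)) | \<mu> b \<nu> a.
      (\<mu>, b) \<in> U \<and> (\<nu>, a) \<in> T \<and>
      (\<lambda>l v. \<nu> l v + \<rho> *\<^sub>R a l v) = (\<lambda>l v. \<mu> l v - \<rho> *\<^sub>R b l v)}"

definition union_induced_edges :: "('v \<times> 'v) set \<Rightarrow> nat \<Rightarrow> (nat \<Rightarrow> 'v set) \<Rightarrow> ('v \<times> 'v) set" where
  "union_induced_edges E L A = {(a, b) \<in> E. \<exists>l<L. a \<in> A l \<and> b \<in> A l}"

definition connected_graph :: "'v set \<Rightarrow> ('v \<times> 'v) set \<Rightarrow> bool" where
  "connected_graph W F \<longleftrightarrow> (\<forall>u\<in>W. \<forall>w\<in>W. (u, w) \<in> (F \<union> F\<inverse>)\<^sup>*)"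

end

theory Submission
  imports Defs
begin

text \<open>The conjugate g* is the indicator of the block-sum-zero subspace, so z \<in> \<partial>g*(\<lambda>) says
  that every block of \<lambda> sums to zero and z is blockwise constant. Hence \<lambda> + \<rho>z = \<zeta> is the
  orthogonal splitting of \<zeta> into its block-mean-free part and its block means, which gives the
  resolvent of U. Once this component is fixed, the resolvent of the Douglas--Rachford operator
  asks for x \<in> \<partial>f*(-M*\<nu>) with \<nu> affine in Mx; as f is separable, this says that each x(v)
  minimizes f_v plus a quadratic, i.e. x(v) is a prox point. Such a minimizer exists by
  coercivity and lower semicontinuity, and it is the only solution by monotonicity of \<partial>f*.\<close>

section \<open>Existence and optimality of proximal points\<close>

lemma closed_sublevels_imp_min_on_compact:
  fixes h :: "'a::metric_space \<Rightarrow> ereal"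
  assumes K: "compact K" "K \<noteq> {}" and cl: "\<And>r. closed {y. h y \<le> ereal r}"
  shows "\<exists>y\<in>K. \<forall>z\<in>K. h y \<le> h z"
proof -
  define m where "m = (INF z\<in>K. h z)"
  define T where "T = {t::real. m < ereal t}"
  have "K \<inter> (\<Inter>t\<in>T. {y. h y \<le> ereal t}) \<noteq> {}"
  proof (rule compact_imp_fip_image[OF K(1) cl])
    fix I' assume fI: "finite I'" and sub: "I' \<subseteq> T"
    show "K \<inter> (\<Inter>t\<in>I'. {y. h y \<le> ereal t}) \<noteq> {}"
    proof (cases "I' = {}")
      case True then show ?thesis using K(2) by simp
    next
      case False
      have "Min I' \<in> T" using Min_in[OF fI False] sub by blast
      then have "m < ereal (Min I')" unfolding T_def by simp
      then obtain z where z: "z \<in> K" "h z < ereal (Min I')" unfolding m_def INF_less_iff by blast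
      have "h z \<le> ereal t" if "t \<in> I'" for t
        using z(2) fI that by (meson Min_le ereal_less_eq(3) less_imp_le order_trans)
      then show ?thesis using z(1) by blast
    qed
  qed
  then obtain y where y: "y \<in> K" "\<And>t. t \<in> T \<Longrightarrow> h y \<le> ereal t" by blast
  have "h y \<le> m"
  proof (rule dense_ge)
    fix x assume "m < x"
    then show "h y \<le> x" using y(2) unfolding T_def by (cases x) auto
  qed
  then show ?thesis using y(1) unfolding m_def by (meson INF_lower order_trans)
qed

lemma closed_fun_add_continuous_sublevel:
  fixes f :: "'a::real_normed_vector \<Rightarrow> ereal"
  assumes "closed_fun f" and "continuous_on UNIV q"
  shows "closed {y. f y + ereal (q y) \<le> ereal r}"
proof -
  have "f y + ereal (q y) \<le> ereal r \<longleftrightarrow> f y \<le> ereal (r - q y)" for y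
    by (cases "f y") auto
  then have "{y. f y + ereal (q y) \<le> ereal r} = (\<lambda>y. (y, r - q y)) -` {(x, r::real). f x \<le> ereal r}"
    by auto
  moreover have "closed ((\<lambda>y. (y, r - q y)) -` {(x, r::real). f x \<le> ereal r})"
    using assms unfolding closed_fun_def
    by (intro continuous_closed_vimage) (auto intro!: continuous_intros simp: continuous_on_eq_continuous_at)
  ultimately show ?thesis by simp
qed

lemma convex_fun_minorant_from_ball:
  fixes f :: "'a::real_normed_vector \<Rightarrow> ereal"
  assumes cv: "convex_fun f" and ninf: "\<And>x. f x \<noteq> -\<infinity>"
    and F1: "f y1 = ereal F1" and ball_min: "\<And>z. z \<in> cball y1 1 \<Longrightarrow> ereal m \<le> f z"
  shows "ereal (m - (F1 - m) * norm (y - y1)) \<le> f y"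
proof -
  have mF1: "m \<le> F1" using ball_min[of y1] F1 by simp
  show ?thesis
  proof (cases "norm (y - y1) \<le> 1")
    case True
    then have "ereal m \<le> f y" using ball_min[of y] by (simp add: dist_norm norm_minus_commute)
    moreover have "m - (F1 - m) * norm (y - y1) \<le> m" using mF1 by simp
    ultimately show ?thesis by (meson ereal_less_eq(3) order_trans)
  next
    case False
    define t where "t = norm (y - y1)"
    have t1: "t > 1" using False t_def by simp
    define d where "d = (1 - 1/t) *\<^sub>R y1 + (1/t) *\<^sub>R y"
    have "d - y1 = (1/t) *\<^sub>R (y - y1)" unfolding d_def by (simp add: algebra_simps)
    then have "d \<in> cball y1 1" using t1 t_def by (simp add: dist_norm norm_minus_commute)
    then have "ereal m \<le> f d" by (rule ball_min)
    also have "f d \<le> ereal (1 - 1/t) * f y1 + ereal (1/t) * f y"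
      using cv t1 unfolding convex_fun_def d_def by simp
    finally have md: "ereal m \<le> ereal (1 - 1/t) * ereal F1 + ereal (1/t) * f y" unfolding F1 .
    show ?thesis
    proof (cases "f y")
      case (real Fy)
      have "m \<le> (1 - 1/t) * F1 + (1/t) * Fy" using md real by simp
      then have "t * m \<le> (t - 1) * F1 + Fy" using t1 by (simp add: field_simps)
      then show ?thesis using real t_def mF1 by (simp add: algebra_simps)
    qed (use ninf in auto)
  qed
qed

lemma proper_closed_convex_norm_minorant:
  fixes f :: "'a::euclidean_space \<Rightarrow> ereal"
  assumes pr: "proper_fun f" and cl: "closed_fun f" and cv: "convex_fun f"
  shows "\<exists>a k. k \<ge> 0 \<and> (\<forall>y. ereal (a - k * norm y) \<le> f y)"
proof -
  have ninf: "\<And>x. f x \<noteq> -\<infinity>" using pr unfolding proper_fun_def by blast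
  obtain y1 F1 where F1: "f y1 = ereal F1"
    using pr ninf unfolding proper_fun_def by (metis ereal_cases)
  have "\<And>r. closed {y. f y \<le> ereal r}"
    using closed_fun_add_continuous_sublevel[OF cl, of "\<lambda>_. 0"] by simp
  then obtain ys where ys: "ys \<in> cball y1 1" "\<And>z. z \<in> cball y1 1 \<Longrightarrow> f ys \<le> f z"
    using closed_sublevels_imp_min_on_compact[of "cball y1 1" f] by auto
  obtain m where m: "f ys = ereal m"
    using ys(2)[of y1] F1 ninf[of ys] by (cases "f ys") auto
  have mF1: "m \<le> F1" using ys(2)[of y1] m F1 by simp
  have minor: "ereal (m - (F1 - m) * norm (y - y1)) \<le> f y" for y
    by (rule convex_fun_minorant_from_ball[OF cv ninf F1]) (use ys(2) m in metis)
  have "ereal (m - (F1 - m) * norm y1 - (F1 - m) * norm y) \<le> f y" for y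
  proof -
    have "(F1 - m) * norm (y - y1) \<le> (F1 - m) * (norm y + norm y1)"
      using mF1 norm_triangle_ineq4[of y y1] by (simp add: mult_left_mono)
    then have "m - (F1 - m) * norm y1 - (F1 - m) * norm y \<le> m - (F1 - m) * norm (y - y1)"
      by (simp add: algebra_simps)
    then show ?thesis using minor[of y] by (meson ereal_less_eq(3) order_trans)
  qed
  then show ?thesis using mF1 by (intro exI[of _ "m - (F1 - m) * norm y1"] exI[of _ "F1 - m"]) auto
qed

lemma quadratic_eventually_exceeds_linear:
  fixes a k c e r :: real
  assumes c: "c > 0"
  shows "\<exists>R. \<forall>t\<ge>R. r < a - k * t + c / 2 * (t - e)\<^sup>2"
proof -
  define D where "D = \<bar>r + k * e - a\<bar> + 1"
  have "r < a - k * t + c / 2 * (t - e)\<^sup>2" if t: "e + max 1 (2 * (k + D) / c) \<le> t" for t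
  proof -
    have u1: "1 \<le> t - e" and u2: "2 * (k + D) / c \<le> t - e" using t by auto
    have "k + D \<le> c / 2 * (t - e)" using u2 c by (simp add: field_simps)
    then have "(k + D) * (t - e) \<le> c / 2 * (t - e) * (t - e)" using u1 by (simp add: mult_right_mono)
    moreover have "D \<le> D * (t - e)" using mult_left_mono[OF u1, of D] unfolding D_def by simp
    then have "k * (t - e) + D \<le> (k + D) * (t - e)" by (simp add: distrib_right)
    ultimately have "k * (t - e) + D \<le> c / 2 * (t - e)\<^sup>2" by (simp add: power2_eq_square)
    moreover have "k * (t - e) = k * t - k * e" by (simp add: right_diff_distrib)
    ultimately show ?thesis using abs_ge_self[of "r + k * e - a"] unfolding D_def by linarith
  qed
  then show ?thesis by blast
qed

lemma prox_objective_has_min: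
  fixes f :: "'a::euclidean_space \<Rightarrow> ereal"
  assumes pr: "proper_fun f" and cl: "closed_fun f" and cv: "convex_fun f" and c: "c > 0"
  shows "\<exists>y. \<forall>z. f y + ereal (c / 2 * (norm (y - p))\<^sup>2) \<le> f z + ereal (c / 2 * (norm (z - p))\<^sup>2)"
proof -
  define h where "h z = f z + ereal (c / 2 * (norm (z - p))\<^sup>2)" for z
  obtain a k where minor: "\<And>y. ereal (a - k * norm y) \<le> f y"
    using proper_closed_convex_norm_minorant[OF pr cl cv] by blast
  obtain y1 F1 where F1: "f y1 = ereal F1"
    using pr unfolding proper_fun_def by (metis ereal_cases)
  define r1 where "r1 = F1 + c / 2 * (norm (y1 - p))\<^sup>2"
  obtain R where R: "\<And>t. t \<ge> R \<Longrightarrow> r1 < a - k * t + c / 2 * (t - norm p)\<^sup>2"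
    using quadratic_eventually_exceeds_linear[OF c] by blast
  define R' where "R' = max R (max (norm p) (norm y1))"
  have far: "h y1 < h y" if y: "R' < norm y" for y
  proof -
    have "(norm y - norm p)\<^sup>2 \<le> (norm (y - p))\<^sup>2"
      using y norm_triangle_ineq2[of y p] unfolding R'_def by (intro power_mono) auto
    then have "c / 2 * (norm y - norm p)\<^sup>2 \<le> c / 2 * (norm (y - p))\<^sup>2" using c by simp
    moreover have "r1 < a - k * norm y + c / 2 * (norm y - norm p)\<^sup>2"
      using R y unfolding R'_def by simp
    ultimately have "r1 < a - k * norm y + c / 2 * (norm (y - p))\<^sup>2" by linarith
    then have "ereal r1 < ereal (a - k * norm y) + ereal (c / 2 * (norm (y - p))\<^sup>2)" by simp
    also have "\<dots> \<le> h y" unfolding h_def by (intro add_right_mono minor)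
    finally show ?thesis unfolding h_def r1_def F1 by simp
  qed
  have "\<And>r. closed {y. h y \<le> ereal r}" unfolding h_def
    by (rule closed_fun_add_continuous_sublevel[OF cl]) (intro continuous_intros)
  then obtain ys where ys: "\<And>z. z \<in> cball 0 R' \<Longrightarrow> h ys \<le> h z"
    using closed_sublevels_imp_min_on_compact[of "cball 0 R'" h] R'_def
    by (metis cball_eq_empty compact_cball linorder_not_le max.cobounded2 norm_ge_zero order_less_le_trans)
  have "y1 \<in> cball 0 R'" unfolding R'_def by simp
  then have "h ys \<le> h z" for z
    using ys[of z] ys[of y1] far[of z] by (cases "z \<in> cball 0 R'") auto
  then show ?thesis unfolding h_def by blast
qed

lemma prox_minimizes:
  fixes f :: "'a::euclidean_space \<Rightarrow> ereal"
  assumes "proper_fun f" "closed_fun f" "convex_fun f" "c > 0"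
  shows "f (prox f c p) + ereal (c / 2 * (norm (prox f c p - p))\<^sup>2) \<le> f z + ereal (c / 2 * (norm (z - p))\<^sup>2)"
proof -
  define h where "h y = f y + ereal (c / 2 * (norm (y - p))\<^sup>2)" for y
  obtain y where "\<forall>z. h y \<le> h z" using prox_objective_has_min[OF assms] unfolding h_def by blast
  then have "is_arg_min h (\<lambda>_. True) y" by (simp add: is_arg_min_def not_less)
  then have "is_arg_min h (\<lambda>_. True) (prox f c p)"
    unfolding prox_def h_def[abs_def, symmetric] arg_min_def by (rule someI)
  then show ?thesis unfolding h_def is_arg_min_def by (simp add: not_less)
qed

lemma nonpos_if_le_small_multiples:
  fixes G K :: real
  assumes "\<And>t. 0 < t \<Longrightarrow> t \<le> 1 \<Longrightarrow> G \<le> t * K"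
  shows "G \<le> 0"
proof (rule field_le_epsilon)
  fix e :: real assume e: "0 < e"
  define t where "t = min 1 (e / (\<bar>K\<bar> + 1))"
  have t: "0 < t" "t \<le> 1" using e by (auto simp: t_def)
  have "t * K \<le> t * \<bar>K\<bar>" using t by (simp add: mult_left_mono)
  also have "\<dots> \<le> e / (\<bar>K\<bar> + 1) * \<bar>K\<bar>" unfolding t_def by (intro mult_right_mono) auto
  also have "\<dots> \<le> e" using e by (simp add: field_simps)
  finally show "G \<le> 0 + e" using assms[OF t] by simp
qed

lemma power2_norm_add_scaleR:
  fixes x y :: "'a::real_inner"
  shows "(norm (x + t *\<^sub>R y))\<^sup>2 = (norm x)\<^sup>2 + 2 * t * (x \<bullet> y) + t * t * (y \<bullet> y)"
  unfolding power2_norm_eq_inner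
  by (simp add: inner_add_left inner_add_right inner_commute[of y x] distrib_left)

lemma prox_objective_min_optimality:
  fixes f :: "'a::real_inner \<Rightarrow> ereal"
  assumes pr: "proper_fun f" and cv: "convex_fun f"
    and mn: "\<And>z. f y + ereal (c / 2 * (norm (y - p))\<^sup>2) \<le> f z + ereal (c / 2 * (norm (z - p))\<^sup>2)"
  shows "\<bar>f y\<bar> \<noteq> \<infinity>" and "f y + ereal ((c *\<^sub>R (p - y)) \<bullet> (w - y)) \<le> f w"
proof -
  have ninf: "\<And>x. f x \<noteq> -\<infinity>" using pr unfolding proper_fun_def by blast
  obtain y1 F1 where "f y1 = ereal F1"
    using pr unfolding proper_fun_def by (metis ereal_cases)
  then have "f y \<noteq> \<infinity>" using mn[of y1] by auto
  then obtain F where F: "f y = ereal F" using ninf[of y] by (cases "f y") auto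
  then show "\<bar>f y\<bar> \<noteq> \<infinity>" by simp
  show "f y + ereal ((c *\<^sub>R (p - y)) \<bullet> (w - y)) \<le> f w"
  proof (cases "f w")
    case (real Fw)
    \<comment> \<open>Compare with the objective at (1 - t) y + t w, divide by t and let t tend to 0.\<close>
    have "F - Fw + c * ((p - y) \<bullet> (w - y)) \<le> t * (c / 2 * ((w - y) \<bullet> (w - y)))"
      if t: "0 < t" "t \<le> 1" for t
    proof -
      define yt where "yt = (1 - t) *\<^sub>R y + t *\<^sub>R w"
      have "f yt \<le> ereal (1 - t) * f y + ereal t * f w"
        using cv t unfolding convex_fun_def yt_def by simp
      then have fyt: "f yt \<le> ereal ((1 - t) * F + t * Fw)" using F real by simp
      have "ereal (F + c / 2 * (norm (y - p))\<^sup>2) \<le> f yt + ereal (c / 2 * (norm (yt - p))\<^sup>2)"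
        using mn[of yt] F by simp
      also have "\<dots> \<le> ereal ((1 - t) * F + t * Fw) + ereal (c / 2 * (norm (yt - p))\<^sup>2)"
        using fyt by (rule add_right_mono)
      finally have "F + c / 2 * (norm (y - p))\<^sup>2 \<le> (1 - t) * F + t * Fw + c / 2 * (norm (yt - p))\<^sup>2"
        by simp
      moreover have "yt - p = (y - p) + t *\<^sub>R (w - y)" unfolding yt_def by (simp add: algebra_simps)
      then have "(norm (yt - p))\<^sup>2 = (norm (y - p))\<^sup>2 + 2 * t * ((y - p) \<bullet> (w - y)) + t * t * ((w - y) \<bullet> (w - y))"
        by (simp only: power2_norm_add_scaleR)
      ultimately have "t * (F - Fw + c * ((p - y) \<bullet> (w - y))) \<le> t * (t * (c / 2 * ((w - y) \<bullet> (w - y))))"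
        by (simp add: algebra_simps inner_diff_left inner_diff_right)
      then show ?thesis using t by simp
    qed
    then have "F - Fw + c * ((p - y) \<bullet> (w - y)) \<le> 0" by (rule nonpos_if_le_small_multiples)
    then show ?thesis using F real by simp
  qed (use ninf in auto)
qed

section \<open>Conjugates and subdifferentials\<close>

lemma subgradient_imp_subdiff_fconj:
  fixes ip :: "'a::ab_group_add \<Rightarrow> 'a \<Rightarrow> real"
  assumes ip_diff: "\<And>a b d. ip a (b - d) = ip a b - ip a d" and ip_comm: "\<And>a b. ip a b = ip b a"
    and x: "x \<in> C" and u: "u \<in> C" and fin: "\<bar>h x\<bar> \<noteq> \<infinity>"
    and sub: "\<And>w. w \<in> C \<Longrightarrow> h x + ereal (ip u (w - x)) \<le> h w"
  shows "x \<in> subdiff C ip (fconj C ip h) u"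
proof -
  obtain a where a: "h x = ereal a" using fin by (cases "h x") auto
  have lower: "ereal (ip w x - a) \<le> fconj C ip h w" for w
    unfolding fconj_def by (rule SUP_upper2[OF x]) (simp add: a)
  have "fconj C ip h u \<le> ereal (ip u x - a)"
    unfolding fconj_def
  proof (rule SUP_least)
    fix y assume "y \<in> C"
    then have "ereal (a + ip u y - ip u x) \<le> h y" using sub[of y] by (simp add: a ip_diff add_diff_eq)
    then show "ereal (ip u y) - h y \<le> ereal (ip u x - a)" by (cases "h y") auto
  qed
  then have conj_u: "fconj C ip h u = ereal (ip u x - a)" using lower[of u] by simp
  have "fconj C ip h u + ereal (ip x (w - u)) \<le> fconj C ip h w" for w
    using lower[of w] unfolding conj_u by (simp add: ip_diff ip_comm[of x])
  then show ?thesis unfolding subdiff_def using x u conj_u by simp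
qed

lemma subdiff_monotone:
  assumes "x \<in> subdiff C ip h u" and "y \<in> subdiff C ip h w"
  shows "ip x (w - u) + ip y (u - w) \<le> 0"
proof -
  have "h u + ereal (ip x (w - u)) \<le> h w" "h w + ereal (ip y (u - w)) \<le> h u"
    and "\<bar>h u\<bar> \<noteq> \<infinity>" "\<bar>h w\<bar> \<noteq> \<infinity>"
    using assms unfolding subdiff_def by auto
  then show ?thesis by (cases "h u"; cases "h w") auto
qed

lemma fsum_subgradient:
  fixes fv :: "'v \<Rightarrow> 'x::euclidean_space \<Rightarrow> ereal"
  assumes finV: "finite V" and fin: "\<And>v. v \<in> V \<Longrightarrow> \<bar>fv v (x v)\<bar> \<noteq> \<infinity>"
    and sub: "\<And>v w. v \<in> V \<Longrightarrow> fv v (x v) + ereal (u v \<bullet> (w - x v)) \<le> fv v w"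
  shows "\<bar>fsum V fv x\<bar> \<noteq> \<infinity>" and "fsum V fv x + ereal (ipV V u (y - x)) \<le> fsum V fv y"
proof -
  have fx: "fsum V fv x = ereal (\<Sum>v\<in>V. real_of_ereal (fv v (x v)))"
    unfolding fsum_def sum_ereal[symmetric] using fin by (intro sum.cong refl) (simp add: ereal_real)
  then show "\<bar>fsum V fv x\<bar> \<noteq> \<infinity>" by simp
  have "fsum V fv x + ereal (ipV V u (y - x)) = (\<Sum>v\<in>V. fv v (x v) + ereal (u v \<bullet> (y v - x v)))"
    unfolding fsum_def ipV_def by (simp add: sum.distrib sum_ereal)
  also have "\<dots> \<le> fsum V fv y" unfolding fsum_def by (intro sum_mono sub)
  finally show "fsum V fv x + ereal (ipV V u (y - x)) \<le> fsum V fv y" .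
qed

lemma subdiff_fconj_fsum_residual_iff:
  fixes fv :: "'v \<Rightarrow> 'x::euclidean_space \<Rightarrow> ereal"
  assumes finV: "finite V"
    and fv_pcc: "\<forall>v\<in>V. proper_fun (fv v) \<and> closed_fun (fv v) \<and> convex_fun (fv v)"
    and c_pos: "\<And>v. v \<in> V \<Longrightarrow> c v > 0"
  shows "x \<in> subdiff (XV V) (ipV V) (fconj (XV V) (ipV V) (fsum V fv))
            (\<lambda>v. if v \<in> V then c v *\<^sub>R (p v - x v) else 0)
     \<longleftrightarrow> x = (\<lambda>v. if v \<in> V then prox (fv v) (c v) (p v) else 0)"
proof -
  define F where "F = fconj (XV V) (ipV V) (fsum V fv)"
  define r where "r y = (\<lambda>v. if v \<in> V then c v *\<^sub>R (p v - y v) else 0)" for y :: "'v \<Rightarrow> 'x"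
  define xp where "xp = (\<lambda>v. if v \<in> V then prox (fv v) (c v) (p v) else 0)"
  have ip_diff: "ipV V a (b - d) = ipV V a b - ipV V a d" for a b d :: "'v \<Rightarrow> 'x"
    unfolding ipV_def by (simp add: inner_diff_right sum_subtractf)
  have ip_comm: "ipV V a b = ipV V b a" for a b :: "'v \<Rightarrow> 'x"
    unfolding ipV_def by (simp add: inner_commute)
  have prox_opt: "\<bar>fv v (xp v)\<bar> \<noteq> \<infinity>" "fv v (xp v) + ereal (r xp v \<bullet> (w - xp v)) \<le> fv v w"
    if v: "v \<in> V" for v w
  proof -
    have pcc: "proper_fun (fv v)" "closed_fun (fv v)" "convex_fun (fv v)" using fv_pcc v by auto
    note mn = prox_minimizes[OF pcc c_pos[OF v], of "p v"]
    show "\<bar>fv v (xp v)\<bar> \<noteq> \<infinity>" "fv v (xp v) + ereal (r xp v \<bullet> (w - xp v)) \<le> fv v w"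
      using prox_objective_min_optimality[OF pcc(1,3) mn] v unfolding xp_def r_def by simp_all
  qed
  have "xp \<in> XV V" "r xp \<in> XV V" unfolding XV_def xp_def r_def by auto
  then have xp_sd: "xp \<in> subdiff (XV V) (ipV V) F (r xp)"
    unfolding F_def
    by (rule subgradient_imp_subdiff_fconj[where ip = "ipV V", OF ip_diff ip_comm])
      (use fsum_subgradient[OF finV prox_opt(1) prox_opt(2)] in auto)
  have "x \<in> subdiff (XV V) (ipV V) F (r x) \<longleftrightarrow> x = xp"
  proof
    assume x_sd: "x \<in> subdiff (XV V) (ipV V) F (r x)"
    have mono: "ipV V x (r xp - r x) + ipV V xp (r x - r xp) \<le> 0"
      using subdiff_monotone[OF x_sd xp_sd] .
    have expand: "ipV V x (r xp - r x) + ipV V xp (r x - r xp) = (\<Sum>v\<in>V. c v * ((x v - xp v) \<bullet> (x v - xp v)))"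
      unfolding ipV_def r_def sum.distrib[symmetric]
      by (intro sum.cong refl) (simp add: inner_diff_left inner_diff_right algebra_simps)
    have nonneg: "0 \<le> c v * ((x v - xp v) \<bullet> (x v - xp v))" if "v \<in> V" for v
      using c_pos[OF that] by simp
    have "(\<Sum>v\<in>V. c v * ((x v - xp v) \<bullet> (x v - xp v))) = 0"
    proof -
      have "0 \<le> (\<Sum>v\<in>V. c v * ((x v - xp v) \<bullet> (x v - xp v)))" by (intro sum_nonneg nonneg)
      then show ?thesis using mono expand by linarith
    qed
    then have "\<forall>v\<in>V. c v * ((x v - xp v) \<bullet> (x v - xp v)) = 0"
      by (simp add: sum_nonneg_eq_0_iff[OF finV nonneg])
    then have "x v = xp v" if "v \<in> V" for v using c_pos[OF that] that by auto
    moreover have "x \<in> XV V" using x_sd unfolding subdiff_def by simp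
    ultimately show "x = xp" unfolding XV_def xp_def by auto
  next
    assume "x = xp"
    then show "x \<in> subdiff (XV V) (ipV V) F (r x)" using xp_sd by simp
  qed
  then show ?thesis unfolding F_def r_def xp_def .
qed

section \<open>The consensus constraint\<close>

definition block_mean :: "(nat \<Rightarrow> 'v set) \<Rightarrow> (nat \<Rightarrow> 'v \<Rightarrow> 'x::real_vector) \<Rightarrow> nat \<Rightarrow> 'x" where
  "block_mean A \<zeta> l = (1 / real (card (A l))) *\<^sub>R (\<Sum>v\<in>A l. \<zeta> l v)"

lemma gfun_eq:
  "gfun L A z = (if \<forall>l<L. \<exists>c. \<forall>v\<in>A l. z l v = c then 0 else \<infinity>)"
  unfolding gfun_def by (auto simp: sum_Pinfty)

lemma ipZ_commute: "ipZ L A z w = ipZ L A w z"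
  unfolding ipZ_def by (simp add: inner_commute)

lemma ipZ_diff: "ipZ L A z (w - u) = ipZ L A z w - ipZ L A z u"
  unfolding ipZ_def by (simp add: inner_diff_right sum_subtractf)

lemma ipZ_blockwise_const:
  assumes "\<And>l v. l < L \<Longrightarrow> v \<in> A l \<Longrightarrow> z l v = c l"
  shows "ipZ L A w z = (\<Sum>l<L. (\<Sum>v\<in>A l. w l v) \<bullet> c l)"
  unfolding ipZ_def inner_sum_left using assms by (intro sum.cong refl) simp

lemma fconj_gfun_zero_sum:
  assumes "\<forall>l<L. (\<Sum>v\<in>A l. lam l v) = 0"
  shows "fconj (ZS L A) (ipZ L A) (gfun L A) (lam :: nat \<Rightarrow> 'v \<Rightarrow> 'x::euclidean_space) = 0"
  unfolding fconj_def
proof (rule antisym)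
  show "(SUP z\<in>ZS L A. ereal (ipZ L A lam z) - gfun L A z) \<le> 0"
  proof (rule SUP_least)
    fix z :: "nat \<Rightarrow> 'v \<Rightarrow> 'x"
    show "ereal (ipZ L A lam z) - gfun L A z \<le> 0"
    proof (cases "\<forall>l<L. \<exists>c. \<forall>v\<in>A l. z l v = c")
      case True
      then obtain c where "\<And>l v. l < L \<Longrightarrow> v \<in> A l \<Longrightarrow> z l v = c l" by metis
      then have "ipZ L A lam z = 0" using assms by (simp add: ipZ_blockwise_const)
      then show ?thesis using True by (simp add: gfun_eq)
    qed (auto simp: gfun_eq)
  qed
  have "ereal (ipZ L A lam 0) - gfun L A (0 :: nat \<Rightarrow> 'v \<Rightarrow> 'x) = 0"
    by (simp add: ipZ_def gfun_eq)
  then show "0 \<le> (SUP z\<in>ZS L A. ereal (ipZ L A lam z) - gfun L A z)"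
    by (intro SUP_upper2[of 0]) (auto simp: ZS_def)
qed

lemma fconj_gfun_nonzero_sum:
  assumes l: "l < L" and s: "(\<Sum>v\<in>A l. lam l v) \<noteq> 0"
  shows "fconj (ZS L A) (ipZ L A) (gfun L A) (lam :: nat \<Rightarrow> 'v \<Rightarrow> 'x::euclidean_space) = \<infinity>"
  unfolding fconj_def
proof (rule ereal_top)
  fix B
  define s where "s = (\<Sum>v\<in>A l. lam l v)"
  define z where "z = (\<lambda>l' v. if l' = l \<and> v \<in> A l then (B / (s \<bullet> s)) *\<^sub>R s else (0::'x))"
  have zZ: "z \<in> ZS L A" unfolding ZS_def z_def using l by auto
  have "\<forall>l'<L. \<exists>c. \<forall>v\<in>A l'. z l' v = c"
  proof (intro allI impI)
    fix l' show "\<exists>c. \<forall>v\<in>A l'. z l' v = c"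
      by (rule exI[of _ "if l' = l then (B / (s \<bullet> s)) *\<^sub>R s else 0"]) (auto simp: z_def)
  qed
  then have "gfun L A z = 0" unfolding gfun_eq by simp
  moreover have "ipZ L A lam z = B"
  proof -
    have "ipZ L A lam z = (\<Sum>l'<L. (\<Sum>v\<in>A l'. lam l' v) \<bullet> (if l' = l then (B / (s \<bullet> s)) *\<^sub>R s else 0))"
      by (rule ipZ_blockwise_const) (auto simp: z_def)
    also have "\<dots> = B" using l s by (simp add: s_def[symmetric] if_distrib[of "inner _"] cong: if_cong)
    finally show ?thesis .
  qed
  ultimately show "ereal B \<le> (SUP z\<in>ZS L A. ereal (ipZ L A lam z) - gfun L A z)"
    by (intro SUP_upper2[OF zZ]) simp
qed

lemma fconj_gfun:
  "fconj (ZS L A) (ipZ L A) (gfun L A) (lam :: nat \<Rightarrow> 'v \<Rightarrow> 'x::euclidean_space)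
     = (if \<forall>l<L. (\<Sum>v\<in>A l. lam l v) = 0 then 0 else \<infinity>)"
  using fconj_gfun_zero_sum fconj_gfun_nonzero_sum by (metis (no_types, lifting))

lemma ipZ_point_mass:
  assumes "l < L" "v \<in> A l" "finite (A l)"
  shows "ipZ L A z (\<lambda>l' v'. if l' = l \<and> v' = v then d else 0) = z l v \<bullet> d"
proof -
  have "ipZ L A z (\<lambda>l' v'. if l' = l \<and> v' = v then d else 0)
      = (\<Sum>l'<L. \<Sum>u\<in>A l'. if l' = l \<and> u = v then z l v \<bullet> d else 0)"
    unfolding ipZ_def by (intro sum.cong refl) auto
  also have "\<dots> = (\<Sum>l'<L. if l' = l then z l v \<bullet> d else 0)"
  proof (intro sum.cong refl)
    fix l' show "(\<Sum>u\<in>A l'. if l' = l \<and> u = v then z l v \<bullet> d else 0) = (if l' = l then z l v \<bullet> d else 0)"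
      using assms by (cases "l' = l") simp_all
  qed
  finally show ?thesis using assms by simp
qed

lemma blockwise_const_if_orthogonal_to_zero_sum:
  fixes z :: "nat \<Rightarrow> 'v \<Rightarrow> 'x::euclidean_space"
  assumes finA: "\<And>l. l < L \<Longrightarrow> finite (A l)"
    and orth: "\<And>e. e \<in> ZS L A \<Longrightarrow> \<forall>l<L. (\<Sum>v\<in>A l. e l v) = 0 \<Longrightarrow> ipZ L A z e \<le> 0"
  shows "\<forall>l<L. \<exists>c. \<forall>v\<in>A l. z l v = c"
proof (intro allI impI)
  fix l assume l: "l < L"
  have "z l v = z l w" if v: "v \<in> A l" and w: "w \<in> A l" for v w
  proof -
    define d where "d = z l v - z l w"
    define pt where "pt u = (\<lambda>l' v'. if l' = l \<and> v' = u then d else 0)" for u :: 'v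
    have pt_sum: "(\<Sum>u'\<in>A l'. pt u l' u') = (if l' = l then d else 0)" if "u \<in> A l" for u l'
      using that finA[OF l] by (cases "l' = l") (simp_all add: pt_def)
    have "pt v - pt w \<in> ZS L A" using l v w unfolding ZS_def pt_def by auto
    moreover have "\<forall>l'<L. (\<Sum>u\<in>A l'. (pt v - pt w) l' u) = 0"
      using pt_sum[OF v] pt_sum[OF w] by (simp add: sum_subtractf)
    ultimately have "ipZ L A z (pt v - pt w) \<le> 0" by (rule orth)
    moreover have "ipZ L A z (pt u) = z l u \<bullet> d" if "u \<in> A l" for u
      unfolding pt_def using ipZ_point_mass[of l L u A] l that finA[OF l] by simp
    ultimately have "d \<bullet> d \<le> 0" using v w unfolding ipZ_diff d_def by (simp add: inner_diff_left)
    then show ?thesis unfolding d_def by (metis inner_gt_zero_iff eq_iff_diff_eq_0 not_le)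
  qed
  then show "\<exists>c. \<forall>v\<in>A l. z l v = c" by (metis equals0I)
qed

lemma subdiff_fconj_gfun_iff:
  fixes z lam :: "nat \<Rightarrow> 'v \<Rightarrow> 'x::euclidean_space"
  assumes finA: "\<And>l. l < L \<Longrightarrow> finite (A l)"
  shows "z \<in> subdiff (ZS L A) (ipZ L A) (fconj (ZS L A) (ipZ L A) (gfun L A)) lam \<longleftrightarrow>
    lam \<in> ZS L A \<and> z \<in> ZS L A \<and> (\<forall>l<L. (\<Sum>v\<in>A l. lam l v) = 0) \<and> (\<forall>l<L. \<exists>c. \<forall>v\<in>A l. z l v = c)"
  (is "?sd \<longleftrightarrow> ?rhs")
proof
  assume ?sd
  then have Z: "lam \<in> ZS L A" "z \<in> ZS L A"
    and fin: "\<bar>fconj (ZS L A) (ipZ L A) (gfun L A) lam\<bar> \<noteq> \<infinity>"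
    and sub: "\<And>w. w \<in> ZS L A \<Longrightarrow> fconj (ZS L A) (ipZ L A) (gfun L A) lam + ereal (ipZ L A z (w - lam))
                  \<le> fconj (ZS L A) (ipZ L A) (gfun L A) w"
    unfolding subdiff_def by auto
  have sums: "\<forall>l<L. (\<Sum>v\<in>A l. lam l v) = 0" using fin by (auto simp: fconj_gfun split: if_splits)
  have "\<forall>l<L. \<exists>c. \<forall>v\<in>A l. z l v = c"
  proof (rule blockwise_const_if_orthogonal_to_zero_sum[OF finA])
    fix e :: "nat \<Rightarrow> 'v \<Rightarrow> 'x" assume e: "e \<in> ZS L A" "\<forall>l<L. (\<Sum>v\<in>A l. e l v) = 0"
    have "lam + e \<in> ZS L A" using Z(1) e(1) unfolding ZS_def by simp
    moreover have "\<forall>l<L. (\<Sum>v\<in>A l. (lam + e) l v) = 0" using sums e(2) by (simp add: sum.distrib)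
    ultimately show "ipZ L A z e \<le> 0" using sub[of "lam + e"] sums by (simp add: fconj_gfun)
  qed
  then show ?rhs using Z sums by blast
next
  assume ?rhs
  then have Z: "lam \<in> ZS L A" "z \<in> ZS L A" and sums: "\<forall>l<L. (\<Sum>v\<in>A l. lam l v) = 0"
    and "\<forall>l<L. \<exists>c. \<forall>v\<in>A l. z l v = c" by auto
  then obtain c where c: "\<And>l v. l < L \<Longrightarrow> v \<in> A l \<Longrightarrow> z l v = c l" by metis
  have "ipZ L A z (w - lam) = 0" if "\<forall>l<L. (\<Sum>v\<in>A l. w l v) = 0" for w
  proof -
    have "ipZ L A z (w - lam) = (\<Sum>l<L. (\<Sum>v\<in>A l. (w - lam) l v) \<bullet> c l)"
      by (subst ipZ_commute) (rule ipZ_blockwise_const[OF c])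
    then show ?thesis using that sums by (simp add: sum_subtractf)
  qed
  then show ?sd unfolding subdiff_def using Z sums by (auto simp: fconj_gfun)
qed

lemma block_decomposition_unique:
  fixes \<zeta> :: "nat \<Rightarrow> 'v \<Rightarrow> 'x::euclidean_space"
  assumes finA: "\<And>l. l < L \<Longrightarrow> finite (A l)" and neA: "\<And>l. l < L \<Longrightarrow> A l \<noteq> {}"
    and rho: "\<rho> \<noteq> 0" and zeta: "\<zeta> \<in> ZS L A"
  shows "(lam \<in> ZS L A \<and> z \<in> ZS L A \<and> (\<forall>l<L. (\<Sum>v\<in>A l. lam l v) = 0) \<and>
          (\<forall>l<L. \<exists>c. \<forall>v\<in>A l. z l v = c) \<and> (\<lambda>l v. lam l v + \<rho> *\<^sub>R z l v) = \<zeta>)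
     \<longleftrightarrow> lam = (\<lambda>l v. if l < L \<and> v \<in> A l then \<zeta> l v - block_mean A \<zeta> l else 0)
       \<and> z = (\<lambda>l v. if l < L \<and> v \<in> A l then (1 / \<rho>) *\<^sub>R block_mean A \<zeta> l else 0)"
    (is "?P \<longleftrightarrow> lam = ?lam0 \<and> z = ?z0")
proof -
  have card: "real (card (A l)) \<noteq> 0" if "l < L" for l using finA[OF that] neA[OF that] by simp
  have sum_zeta: "(\<Sum>v\<in>A l. \<zeta> l v) = real (card (A l)) *\<^sub>R block_mean A \<zeta> l" if "l < L" for l
    using card[OF that] unfolding block_mean_def by simp
  show ?thesis
  proof
    assume H: ?P
    then obtain c where c: "\<And>l v. l < L \<Longrightarrow> v \<in> A l \<Longrightarrow> z l v = c l" by metis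
    have eq: "lam l v + \<rho> *\<^sub>R z l v = \<zeta> l v" for l v using H by (auto dest: fun_cong)
    have mean: "block_mean A \<zeta> l = \<rho> *\<^sub>R c l" if l: "l < L" for l
    proof -
      have "real (card (A l)) *\<^sub>R block_mean A \<zeta> l = (\<Sum>v\<in>A l. lam l v + \<rho> *\<^sub>R c l)"
        unfolding sum_zeta[OF l, symmetric] eq[symmetric] using c[OF l] by simp
      also have "\<dots> = real (card (A l)) *\<^sub>R (\<rho> *\<^sub>R c l)"
        using H l by (simp add: sum.distrib sum_constant_scaleR)
      finally show ?thesis using card[OF l] scaleR_cancel_left by blast
    qed
    have "z = ?z0" using H c mean rho unfolding ZS_def by (auto simp: fun_eq_iff)
    moreover have "lam = ?lam0"
    proof (intro ext)
      fix l v show "lam l v = ?lam0 l v"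
        using H eq[of l v] c[of l v] mean[of l] unfolding ZS_def by (auto simp: eq_diff_eq)
    qed
    ultimately show "lam = ?lam0 \<and> z = ?z0" by simp
  next
    assume H: "lam = ?lam0 \<and> z = ?z0"
    have "(\<Sum>v\<in>A l. lam l v) = 0" if "l < L" for l
      using H sum_zeta[OF that] that by (simp add: sum_subtractf sum_constant_scaleR)
    moreover have "(\<lambda>l v. lam l v + \<rho> *\<^sub>R z l v) = \<zeta>"
      using H rho zeta unfolding ZS_def by (auto simp: fun_eq_iff)
    ultimately show ?P using H unfolding ZS_def by auto
  qed
qed

section \<open>Resolvents\<close>

lemma resolventZ_iff:
  "(\<zeta>, \<mu>) \<in> resolventZ c Op \<longleftrightarrow> (\<exists>b. (\<mu>, b) \<in> Op \<and> (\<lambda>l v. \<mu> l v + c *\<^sub>R b l v) = \<zeta>)"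
  unfolding resolventZ_def by auto

lemma Uop_resolvent_iff:
  fixes \<zeta> :: "nat \<Rightarrow> 'v \<Rightarrow> 'x::euclidean_space"
  assumes finA: "\<And>l. l < L \<Longrightarrow> finite (A l)" and neA: "\<And>l. l < L \<Longrightarrow> A l \<noteq> {}"
    and rho: "\<rho> \<noteq> 0" and zeta: "\<zeta> \<in> ZS L A"
  shows "((\<mu>, b) \<in> Uop L A \<and> (\<lambda>l v. \<mu> l v + \<rho> *\<^sub>R b l v) = \<zeta>)
     \<longleftrightarrow> \<mu> = (\<lambda>l v. if l < L \<and> v \<in> A l then \<zeta> l v - block_mean A \<zeta> l else 0)
       \<and> b = (\<lambda>l v. if l < L \<and> v \<in> A l then (1 / \<rho>) *\<^sub>R block_mean A \<zeta> l else 0)"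
proof -
  have "(\<mu>, b) \<in> Uop L A \<longleftrightarrow> \<mu> \<in> ZS L A \<and> b \<in> ZS L A \<and> (\<forall>l<L. (\<Sum>v\<in>A l. \<mu> l v) = 0) \<and>
      (\<forall>l<L. \<exists>c. \<forall>v\<in>A l. b l v = c)"
    unfolding Uop_def using subdiff_fconj_gfun_iff[OF finA, where z = b and lam = \<mu>] by auto
  then show ?thesis using block_decomposition_unique[OF finA neA rho zeta, of \<mu> b] by blast
qed

lemma resolventZ_DRop_iff:
  assumes U_unique: "\<And>\<mu> b. ((\<mu>, b) \<in> U \<and> (\<lambda>l v. \<mu> l v + \<rho> *\<^sub>R b l v) = \<zeta>) \<longleftrightarrow> \<mu> = \<mu>0 \<and> b = b0"
  shows "(\<zeta>, s) \<in> resolventZ 1 (DRop \<rho> T U) \<longleftrightarrow>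
    (\<exists>a. ((\<lambda>l v. \<mu>0 l v - \<rho> *\<^sub>R b0 l v - \<rho> *\<^sub>R a l v), a) \<in> T \<and> s = (\<lambda>l v. \<mu>0 l v - \<rho> *\<^sub>R a l v))"
proof
  assume "(\<zeta>, s) \<in> resolventZ 1 (DRop \<rho> T U)"
  then obtain \<mu> b \<nu> a where s: "s = (\<lambda>l v. \<nu> l v + \<rho> *\<^sub>R b l v)" and U: "(\<mu>, b) \<in> U"
    and T: "(\<nu>, a) \<in> T" and split: "(\<lambda>l v. \<nu> l v + \<rho> *\<^sub>R a l v) = (\<lambda>l v. \<mu> l v - \<rho> *\<^sub>R b l v)"
    and zeta: "\<zeta> = (\<lambda>l v. s l v + (\<mu> l v - \<nu> l v))"
    unfolding resolventZ_def DRop_def by auto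
  have "(\<lambda>l v. \<mu> l v + \<rho> *\<^sub>R b l v) = \<zeta>" unfolding zeta s by (simp add: algebra_simps)
  then have \<mu>b: "\<mu> = \<mu>0" "b = b0" using U U_unique by auto
  have \<nu>: "\<nu> = (\<lambda>l v. \<mu>0 l v - \<rho> *\<^sub>R b0 l v - \<rho> *\<^sub>R a l v)"
    using split unfolding \<mu>b by (auto simp: fun_eq_iff algebra_simps dest: fun_cong)
  show "\<exists>a. ((\<lambda>l v. \<mu>0 l v - \<rho> *\<^sub>R b0 l v - \<rho> *\<^sub>R a l v), a) \<in> T \<and> s = (\<lambda>l v. \<mu>0 l v - \<rho> *\<^sub>R a l v)"
    using T unfolding s \<nu> \<mu>b by auto
next
  assume "\<exists>a. ((\<lambda>l v. \<mu>0 l v - \<rho> *\<^sub>R b0 l v - \<rho> *\<^sub>R a l v), a) \<in> T \<and> s = (\<lambda>l v. \<mu>0 l v - \<rho> *\<^sub>R a l v)"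
  then obtain a where T: "((\<lambda>l v. \<mu>0 l v - \<rho> *\<^sub>R b0 l v - \<rho> *\<^sub>R a l v), a) \<in> T"
    and s: "s = (\<lambda>l v. \<mu>0 l v - \<rho> *\<^sub>R a l v)" by blast
  have U: "(\<mu>0, b0) \<in> U" and zeta: "(\<lambda>l v. \<mu>0 l v + \<rho> *\<^sub>R b0 l v) = \<zeta>" using U_unique by auto
  have "(s, \<lambda>l v. \<mu>0 l v - (\<mu>0 l v - \<rho> *\<^sub>R b0 l v - \<rho> *\<^sub>R a l v)) \<in> DRop \<rho> T U"
    unfolding DRop_def
    by (intro CollectI exI[of _ \<mu>0] exI[of _ b0] exI[of _ "\<lambda>l v. \<mu>0 l v - \<rho> *\<^sub>R b0 l v - \<rho> *\<^sub>R a l v"] exI[of _ a])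
      (use U T in \<open>auto simp: s fun_eq_iff\<close>)
  moreover have "(\<lambda>l v. s l v + 1 *\<^sub>R (\<mu>0 l v - (\<mu>0 l v - \<rho> *\<^sub>R b0 l v - \<rho> *\<^sub>R a l v))) = \<zeta>"
    unfolding s zeta[symmetric] by (simp add: fun_eq_iff)
  ultimately show "(\<zeta>, s) \<in> resolventZ 1 (DRop \<rho> T U)" unfolding resolventZ_iff by blast
qed

lemma card_sigma_idx_pos:
  assumes "(\<Union>l<L. A l) = V" and "v \<in> V"
  shows "0 < card (sigma_idx L A v)"
proof -
  have "sigma_idx L A v \<noteq> {}" using assms unfolding sigma_idx_def by auto
  moreover have "finite (sigma_idx L A v)" unfolding sigma_idx_def by simp
  ultimately show ?thesis by (simp add: card_gt_0_iff)
qed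

lemma Madj_Mop_residual:
  fixes x :: "'v \<Rightarrow> 'x::euclidean_space"
  assumes A_cover: "(\<Union>l<L. A l) = V" and rho: "\<rho> \<noteq> 0"
  defines "n v \<equiv> real (card (sigma_idx L A v))"
  shows "- Madj V L A (\<lambda>l v. \<mu>0 l v - \<rho> *\<^sub>R (if l < L \<and> v \<in> A l then \<beta> l else 0) + \<rho> *\<^sub>R Mop L A x l v)
    = (\<lambda>v. if v \<in> V then (\<rho> * n v) *\<^sub>R
         ((1 / n v) *\<^sub>R (\<Sum>m\<in>sigma_idx L A v. \<beta> m - (1 / \<rho>) *\<^sub>R \<mu>0 m v) - x v) else 0)"
proof (rule ext)
  fix v
  show "(- Madj V L A (\<lambda>l v. \<mu>0 l v - \<rho> *\<^sub>R (if l < L \<and> v \<in> A l then \<beta> l else 0) + \<rho> *\<^sub>R Mop L A x l v)) v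
    = (if v \<in> V then (\<rho> * n v) *\<^sub>R ((1 / n v) *\<^sub>R (\<Sum>m\<in>sigma_idx L A v. \<beta> m - (1 / \<rho>) *\<^sub>R \<mu>0 m v) - x v) else 0)"
  proof (cases "v \<in> V")
    case True
    have n: "n v \<noteq> 0" using card_sigma_idx_pos[OF A_cover True] unfolding n_def by simp
    have "Madj V L A (\<lambda>l v. \<mu>0 l v - \<rho> *\<^sub>R (if l < L \<and> v \<in> A l then \<beta> l else 0) + \<rho> *\<^sub>R Mop L A x l v) v
        = (\<Sum>m\<in>sigma_idx L A v. \<mu>0 m v - \<rho> *\<^sub>R \<beta> m) + (\<rho> * n v) *\<^sub>R x v"
      using True unfolding Madj_def Mop_def n_def
      by (simp add: sigma_idx_def sum.distrib sum_constant_scaleR)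
    moreover have "(\<rho> * n v) *\<^sub>R ((1 / n v) *\<^sub>R (\<Sum>m\<in>sigma_idx L A v. \<beta> m - (1 / \<rho>) *\<^sub>R \<mu>0 m v))
        = - (\<Sum>m\<in>sigma_idx L A v. \<mu>0 m v - \<rho> *\<^sub>R \<beta> m)"
      using n rho by (simp add: scaleR_sum_right scaleR_diff_right sum_negf[symmetric])
    ultimately show ?thesis using True by (simp add: scaleR_diff_right)
  qed (simp add: Madj_def)
qed

lemma resolventZ_DRop_Top_eq:
  fixes fv :: "'v \<Rightarrow> 'x::euclidean_space \<Rightarrow> ereal"
  assumes finV: "finite V"
    and fv_pcc: "\<forall>v\<in>V. proper_fun (fv v) \<and> closed_fun (fv v) \<and> convex_fun (fv v)"
    and A_cover: "(\<Union>l<L. A l) = V" and rho: "\<rho> > 0"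
    and U_unique: "\<And>\<mu> b. ((\<mu>, b) \<in> U \<and> (\<lambda>l v. \<mu> l v + \<rho> *\<^sub>R b l v) = \<zeta>)
        \<longleftrightarrow> \<mu> = \<mu>0 \<and> b = (\<lambda>l v. if l < L \<and> v \<in> A l then \<beta> l else 0)"
    and \<mu>0: "\<mu>0 \<in> ZS L A"
  shows "{s. (\<zeta>, s) \<in> resolventZ 1 (DRop \<rho> (Top V L A fv) U)} =
    {\<lambda>l v. if l < L \<and> v \<in> A l then \<mu>0 l v + \<rho> *\<^sub>R prox (fv v) (\<rho> * real (card (sigma_idx L A v)))
        ((1 / real (card (sigma_idx L A v))) *\<^sub>R (\<Sum>m\<in>sigma_idx L A v. \<beta> m - (1 / \<rho>) *\<^sub>R \<mu>0 m v)) else 0}"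
proof -
  define b0 where "b0 = (\<lambda>l v. if l < L \<and> v \<in> A l then \<beta> l else (0::'x))"
  define n where "n v = real (card (sigma_idx L A v))" for v
  define p where "p v = (1 / n v) *\<^sub>R (\<Sum>m\<in>sigma_idx L A v. \<beta> m - (1 / \<rho>) *\<^sub>R \<mu>0 m v)" for v
  define \<nu> where "\<nu> x = (\<lambda>l v. \<mu>0 l v - \<rho> *\<^sub>R b0 l v + \<rho> *\<^sub>R Mop L A x l v)" for x :: "'v \<Rightarrow> 'x"
  define xp where "xp = (\<lambda>v. if v \<in> V then prox (fv v) (\<rho> * n v) (p v) else 0)"
  define F where "F = fconj (XV V) (ipV V) (fsum V fv)"
  have c_pos: "\<And>v. v \<in> V \<Longrightarrow> 0 < \<rho> * n v"
    using rho card_sigma_idx_pos[OF A_cover] unfolding n_def by simp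
  have sd_iff: "x \<in> subdiff (XV V) (ipV V) F (- Madj V L A (\<nu> x)) \<longleftrightarrow> x = xp" for x
    using subdiff_fconj_fsum_residual_iff[OF finV fv_pcc c_pos, where p = p and x = x]
    unfolding F_def \<nu>_def b0_def xp_def p_def n_def Madj_Mop_residual[OF A_cover less_imp_neq[OF rho, symmetric]] .
  have step: "((\<lambda>l v. \<mu>0 l v - \<rho> *\<^sub>R b0 l v - \<rho> *\<^sub>R a l v), a) \<in> Top V L A fv \<longleftrightarrow> a = - Mop L A xp" for a
  proof
    assume "((\<lambda>l v. \<mu>0 l v - \<rho> *\<^sub>R b0 l v - \<rho> *\<^sub>R a l v), a) \<in> Top V L A fv"
    then obtain x where a: "a = - Mop L A x"
      and "x \<in> subdiff (XV V) (ipV V) F (- Madj V L A (\<lambda>l v. \<mu>0 l v - \<rho> *\<^sub>R b0 l v - \<rho> *\<^sub>R a l v))"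
      unfolding Top_def F_def by auto
    then have "x = xp" unfolding sd_iff[symmetric] a \<nu>_def by (simp add: fun_eq_iff)
    then show "a = - Mop L A xp" using a by simp
  next
    assume a: "a = - Mop L A xp"
    have "(\<lambda>l v. \<mu>0 l v - \<rho> *\<^sub>R b0 l v - \<rho> *\<^sub>R a l v) = \<nu> xp"
      unfolding a \<nu>_def by (simp add: fun_eq_iff)
    moreover have "\<nu> xp \<in> ZS L A" using \<mu>0 unfolding \<nu>_def b0_def ZS_def Mop_def by auto
    ultimately show "((\<lambda>l v. \<mu>0 l v - \<rho> *\<^sub>R b0 l v - \<rho> *\<^sub>R a l v), a) \<in> Top V L A fv"
      using sd_iff[of xp] unfolding Top_def F_def a by auto
  qed
  have "(\<zeta>, s) \<in> resolventZ 1 (DRop \<rho> (Top V L A fv) U) \<longleftrightarrow>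
      s = (\<lambda>l v. \<mu>0 l v - \<rho> *\<^sub>R (- Mop L A xp) l v)" for s
    unfolding resolventZ_DRop_iff[OF U_unique[folded b0_def]] step by auto
  moreover have "(\<lambda>l v. \<mu>0 l v - \<rho> *\<^sub>R (- Mop L A xp) l v) =
    (\<lambda>l v. if l < L \<and> v \<in> A l then \<mu>0 l v + \<rho> *\<^sub>R prox (fv v) (\<rho> * real (card (sigma_idx L A v)))
        ((1 / real (card (sigma_idx L A v))) *\<^sub>R (\<Sum>m\<in>sigma_idx L A v. \<beta> m - (1 / \<rho>) *\<^sub>R \<mu>0 m v)) else 0)"
    using \<mu>0 A_cover unfolding xp_def Mop_def p_def n_def ZS_def by (auto simp: fun_eq_iff)
  ultimately show ?thesis by auto
qed

lemma Uop_resolvent_pairs: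
  fixes \<zeta> :: "nat \<Rightarrow> 'v \<Rightarrow> 'x::euclidean_space"
  assumes "\<And>l. l < L \<Longrightarrow> finite (A l)" "\<And>l. l < L \<Longrightarrow> A l \<noteq> {}" "\<rho> \<noteq> 0" "\<zeta> \<in> ZS L A"
  shows "{(lam, z). lam \<in> ZS L A \<and> z \<in> ZS L A \<and>
            z \<in> subdiff (ZS L A) (ipZ L A) (fconj (ZS L A) (ipZ L A) (gfun L A)) lam \<and>
            (\<lambda>l v. lam l v + \<rho> *\<^sub>R z l v) = \<zeta>}
    = {((\<lambda>l v. if l < L \<and> v \<in> A l then \<zeta> l v - block_mean A \<zeta> l else 0),
        (\<lambda>l v. if l < L \<and> v \<in> A l then (1 / \<rho>) *\<^sub>R block_mean A \<zeta> l else 0))}"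
proof -
  have "(lam \<in> ZS L A \<and> z \<in> ZS L A \<and>
            z \<in> subdiff (ZS L A) (ipZ L A) (fconj (ZS L A) (ipZ L A) (gfun L A)) lam \<and>
            (\<lambda>l v. lam l v + \<rho> *\<^sub>R z l v) = \<zeta>)
      \<longleftrightarrow> ((lam, z) \<in> Uop L A \<and> (\<lambda>l v. lam l v + \<rho> *\<^sub>R z l v) = \<zeta>)" for lam z
    unfolding Uop_def subdiff_def by auto
  then show ?thesis using Uop_resolvent_iff[OF assms] by auto
qed

lemma resolventZ_Uop_eq:
  fixes \<zeta> :: "nat \<Rightarrow> 'v \<Rightarrow> 'x::euclidean_space"
  assumes "\<And>l. l < L \<Longrightarrow> finite (A l)" "\<And>l. l < L \<Longrightarrow> A l \<noteq> {}" "\<rho> \<noteq> 0" "\<zeta> \<in> ZS L A"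
  shows "{\<mu>. (\<zeta>, \<mu>) \<in> resolventZ \<rho> (Uop L A)}
    = {\<lambda>l v. if l < L \<and> v \<in> A l then \<zeta> l v - block_mean A \<zeta> l else 0}"
  using Uop_resolvent_iff[OF assms] unfolding resolventZ_iff by auto

theorem mainTheorem4:
  fixes V :: "'v set" and E :: "('v \<times> 'v) set"
    and fv :: "'v \<Rightarrow> 'x::euclidean_space \<Rightarrow> ereal"
    and L :: nat and A :: "nat \<Rightarrow> 'v set"
    and \<rho> :: real and \<zeta> :: "nat \<Rightarrow> 'v \<Rightarrow> 'x"
  assumes finV: "finite V"
    and fv_pcc: "\<forall>v\<in>V. proper_fun (fv v) \<and> closed_fun (fv v) \<and> convex_fun (fv v)"
    and inf_attained: "\<exists>y0. \<bar>\<Sum>v\<in>V. fv v y0\<bar> \<noteq> \<infinity> \<and> (\<forall>y. (\<Sum>v\<in>V. fv v y0) \<le> (\<Sum>v\<in>V. fv v y))"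
    and graph: "E \<subseteq> V \<times> V"
    and A_sub: "\<forall>l<L. A l \<subseteq> V \<and> A l \<noteq> {}"
    and A_cover: "(\<Union>l<L. A l) = V"
    and conn: "connected_graph V (union_induced_edges E L A)"
    and rho_pos: "\<rho> > 0"
    and zeta_in: "\<zeta> \<in> ZS L A"
  shows
    "let zbar = (\<lambda>l. (1 / real (card (A l))) *\<^sub>R (\<Sum>v\<in>A l. \<zeta> l v));
         lam0 = (\<lambda>l v. if l < L \<and> v \<in> A l then \<zeta> l v - zbar l else 0);
         z0 = (\<lambda>l v. if l < L \<and> v \<in> A l then (1 / \<rho>) *\<^sub>R zbar l else 0);
         U = Uop L A;
         x0 = (\<lambda>v. prox (fv v) (\<rho> * real (card (sigma_idx L A v)))
                ((1 / real (card (sigma_idx L A v))) *\<^sub>R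
                  (\<Sum>m\<in>sigma_idx L A v. (1 / \<rho>) *\<^sub>R zbar m - (1 / \<rho>) *\<^sub>R lam0 m v)));
         s0 = (\<lambda>l v. if l < L \<and> v \<in> A l then lam0 l v + \<rho> *\<^sub>R x0 v else 0)
     in {(lam, z). lam \<in> ZS L A \<and> z \<in> ZS L A \<and>
            z \<in> subdiff (ZS L A) (ipZ L A) (fconj (ZS L A) (ipZ L A) (gfun L A)) lam \<and>
            (\<lambda>l v. lam l v + \<rho> *\<^sub>R z l v) = \<zeta>} = {(lam0, z0)}
      \<and> {\<mu>. (\<zeta>, \<mu>) \<in> resolventZ \<rho> U} = {lam0}
      \<and> {s. (\<zeta>, s) \<in> resolventZ 1 (DRop \<rho> (Top V L A fv) U)} = {s0}"
proof -
  have finA: "\<And>l. l < L \<Longrightarrow> finite (A l)" using A_sub finV finite_subset by blast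
  have neA: "\<And>l. l < L \<Longrightarrow> A l \<noteq> {}" using A_sub by blast
  have rho: "\<rho> \<noteq> 0" using rho_pos by simp
  have lam0: "(\<lambda>l v. if l < L \<and> v \<in> A l then \<zeta> l v - block_mean A \<zeta> l else 0) \<in> ZS L A"
    unfolding ZS_def by simp
  note U_unique = Uop_resolvent_iff[OF finA neA rho zeta_in]
  show ?thesis
    unfolding Let_def
    using Uop_resolvent_pairs[OF finA neA rho zeta_in] resolventZ_Uop_eq[OF finA neA rho zeta_in]
      resolventZ_DRop_Top_eq[OF finV fv_pcc A_cover rho_pos U_unique lam0]
    unfolding block_mean_def by (intro conjI) assumption+
qed

end
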